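(* Let $D_n$ be the complete digraph on $n$ vertices (containing both arcs $(u,v)$ and $(v,u)$ for all distinct vertices $u,v$). If $R \subseteq E(D_n)$ is a set of $\ell$ arcs and $j > \ell$, then there are at most $j^\ell n^{j - \ell - 1}$ directed cycles of length $j$ in $D_n$ which contain all arcs of $R$. *)

theory Defs
  imports Main
begin

definition dn_arcs :: "nat \<Rightarrow> (nat \<times> nat) set" where
  "dn_arcs n = {(u, v). u < n \<and> v < n \<and> u \<noteq> v}"

definition dir_cycles :: "nat \<Rightarrow> nat \<Rightarrow> (nat \<times> nat) set set" where
  "dir_cycles n j = {C. 2 \<le> j \<and> (\<exists>f. inj_on f {..<j} \<and> f ` {..<j} \<subseteq> {..<n} \<and>
       C = {(f i, f ((i + 1) mod j)) | i. i < j})}"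

end

theory Submission
  imports Defs "HOL-Library.FuncSet"
begin

text \<open>Parametrize a closed walk of length j by a map f on positions {..<j}. A cycle through
  the l arcs of R is fixed once we know at which positions the arcs of R sit (at most j^l
  choices) and the vertices at the remaining positions. A set of l < j positions on the
  cyclic order is not closed under the successor, so the arcs of R occupy at least l + 1
  vertex positions, which leaves at most j - l - 1 free vertices, each with n choices.\<close>

definition cycle_arc :: "nat \<Rightarrow> (nat \<Rightarrow> 'a) \<Rightarrow> nat \<Rightarrow> 'a \<times> 'a" where
  "cycle_arc j f i = (f i, f (Suc i mod j))"

lemma lessThan_subset_if_Suc_mod_closed:
  fixes P :: "nat set"
  assumes "p \<in> P" "p < j" and closed: "(\<lambda>i. Suc i mod j) ` P \<subseteq> P"
  shows "{..<j} \<subseteq> P"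
proof -
  have shifted: "(p + k) mod j \<in> P" for k
  proof (induction k)
    case 0
    then show ?case using assms(1,2) by simp
  next
    case (Suc k)
    have "(p + Suc k) mod j = Suc ((p + k) mod j) mod j" by (simp add: mod_Suc_eq)
    then show ?case using Suc closed by auto
  qed
  show ?thesis
  proof
    fix i assume "i \<in> {..<j}"
    then have "(p + (j - p + i)) mod j = i" using \<open>p < j\<close> by simp
    then show "i \<in> P" using shifted[of "j - p + i"] by simp
  qed
qed

lemma card_less_card_Un_Suc_mod:
  fixes P :: "nat set"
  assumes "P \<subseteq> {..<j}" "P \<noteq> {}" "card P < j"
  shows "card P < card (P \<union> (\<lambda>i. Suc i mod j) ` P)"
proof (rule ccontr)
  assume "\<not> ?thesis"
  moreover have "finite P" using assms(1) finite_subset by blast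
  ultimately have "P = P \<union> (\<lambda>i. Suc i mod j) ` P"
    by (intro card_seteq Un_upper1) simp_all
  moreover obtain p where "p \<in> P" using assms(2) by blast
  ultimately have "{..<j} \<subseteq> P"
    using assms(1) by (intro lessThan_subset_if_Suc_mod_closed) auto
  with \<open>finite P\<close> have "j \<le> card P" by (metis card_lessThan card_mono)
  then show False using assms(3) by simp
qed

lemma cycle_arc_eq_on_occupied_positions:
  assumes "\<forall>r\<in>R. cycle_arc j f (p r) = r" "\<forall>r\<in>R. cycle_arc j g (p r) = r"
    and "i \<in> p ` R \<union> (\<lambda>i. Suc i mod j) ` p ` R"
  shows "f i = g i"
proof -
  obtain r where r: "r \<in> R" and i: "i = p r \<or> i = Suc (p r) mod j" using assms(3) by auto
  then have "cycle_arc j f (p r) = cycle_arc j g (p r)" using assms(1,2) by simp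
  then show ?thesis using i by (auto simp: cycle_arc_def)
qed

lemma card_maps_with_arcs_at_positions_le:
  fixes R :: "('a \<times> 'a) set"
  assumes "finite V" "finite R" "R \<noteq> {}" "card R < j" "p ` R \<subseteq> {..<j}"
  shows "card {f \<in> {..<j} \<rightarrow>\<^sub>E V. \<forall>r\<in>R. cycle_arc j f (p r) = r} \<le> card V ^ (j - card R - 1)"
    (is "card ?F \<le> _")
proof (cases "?F = {}")
  case False
  then obtain f0 where "f0 \<in> ?F" by blast
  then have f0: "f0 0 \<in> V" "\<forall>r\<in>R. cycle_arc j f0 (p r) = r" using assms(4) by auto
  define occupied where "occupied = p ` R \<union> (\<lambda>i. Suc i mod j) ` p ` R"
  define free where "free = {..<j} - occupied"
  have "inj_on p R" using f0(2) by (intro inj_onI) metis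
  then have "card (p ` R) = card R" by (rule card_image)
  then have "card R < card occupied"
    unfolding occupied_def using assms(3-5) card_less_card_Un_Suc_mod[of "p ` R" j] by simp
  moreover have "occupied \<subseteq> {..<j}" unfolding occupied_def using assms(4,5) by auto
  ultimately have card_free: "card free \<le> j - card R - 1"
    unfolding free_def by (simp add: card_Diff_subset finite_subset[OF _ finite_lessThan])
  have "0 < card V" using f0(1) assms(1) card_gt_0_iff by blast
  have "inj_on (\<lambda>f. restrict f free) ?F"
  proof (rule inj_onI)
    fix f g assume f: "f \<in> ?F" and g: "g \<in> ?F" and "restrict f free = restrict g free"
    then have on_free: "f i = g i" if "i \<in> free" for i using that by (metis restrict_apply')
    have on_occupied: "f i = g i" if "i \<in> occupied" for i
      using f g that unfolding occupied_def by (intro cycle_arc_eq_on_occupied_positions) auto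
    have "f i = g i" if "i \<in> {..<j}" for i
      using that on_free on_occupied unfolding free_def by blast
    then show "f = g" using f g by (intro PiE_ext[of f "{..<j}" "\<lambda>_. V" g]) simp_all
  qed
  moreover have "(\<lambda>f. restrict f free) ` ?F \<subseteq> free \<rightarrow>\<^sub>E V" unfolding free_def by auto
  ultimately have "card ?F \<le> card (free \<rightarrow>\<^sub>E V)"
    using assms(1) by (intro card_inj_on_le) (simp_all add: free_def finite_PiE)
  also have "\<dots> = card V ^ card free" by (simp add: card_PiE free_def)
  also have "\<dots> \<le> card V ^ (j - card R - 1)"
    using card_free \<open>0 < card V\<close> by (intro power_increasing) auto
  finally show ?thesis .
next
  case True
  then show ?thesis by (metis card.empty zero_le)
qed

lemma card_maps_containing_arcs_le:
  fixes R :: "('a \<times> 'a) set"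
  assumes "finite V" "finite R" "R \<noteq> {}" "card R < j"
  shows "card {f \<in> {..<j} \<rightarrow>\<^sub>E V. R \<subseteq> cycle_arc j f ` {..<j}}
    \<le> j ^ card R * card V ^ (j - card R - 1)"
proof -
  let ?F = "\<lambda>p. {f \<in> {..<j} \<rightarrow>\<^sub>E V. \<forall>r\<in>R. cycle_arc j f (p r) = r}"
  have "{f \<in> {..<j} \<rightarrow>\<^sub>E V. R \<subseteq> cycle_arc j f ` {..<j}} \<subseteq> (\<Union>p \<in> R \<rightarrow>\<^sub>E {..<j}. ?F p)"
  proof
    fix f assume f: "f \<in> {f \<in> {..<j} \<rightarrow>\<^sub>E V. R \<subseteq> cycle_arc j f ` {..<j}}"
    then have "\<forall>r\<in>R. \<exists>i. i < j \<and> cycle_arc j f i = r" by blast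
    then obtain p where p: "\<forall>r\<in>R. p r < j \<and> cycle_arc j f (p r) = r" by metis
    then have "restrict p R \<in> R \<rightarrow>\<^sub>E {..<j}" by auto
    moreover have "f \<in> ?F (restrict p R)" using f p by auto
    ultimately show "f \<in> (\<Union>p \<in> R \<rightarrow>\<^sub>E {..<j}. ?F p)" by blast
  qed
  moreover have "finite (\<Union>p \<in> R \<rightarrow>\<^sub>E {..<j}. ?F p)"
    by (rule finite_subset[of _ "{..<j} \<rightarrow>\<^sub>E V"]) (auto simp: assms(1) finite_PiE)
  ultimately have "card {f \<in> {..<j} \<rightarrow>\<^sub>E V. R \<subseteq> cycle_arc j f ` {..<j}}
      \<le> card (\<Union>p \<in> R \<rightarrow>\<^sub>E {..<j}. ?F p)"
    by (rule card_mono[rotated])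
  also have "\<dots> \<le> (\<Sum>p \<in> R \<rightarrow>\<^sub>E {..<j}. card (?F p))"
    using assms(2) by (intro card_UN_le finite_PiE) auto
  also have "\<dots> \<le> (\<Sum>p \<in> R \<rightarrow>\<^sub>E {..<j}. card V ^ (j - card R - 1))"
    using assms by (intro sum_mono card_maps_with_arcs_at_positions_le) auto
  also have "\<dots> = card (R \<rightarrow>\<^sub>E {..<j}) * card V ^ (j - card R - 1)" by simp
  also have "\<dots> = j ^ card R * card V ^ (j - card R - 1)"
    using assms(2) by (simp add: card_PiE)
  finally show ?thesis .
qed

lemma cycle_arcs_restrict:
  "cycle_arc j (restrict f {..<j}) ` {..<j} = cycle_arc j f ` {..<j}"
proof -
  have "cycle_arc j (restrict f {..<j}) i = cycle_arc j f i" if "i < j" for i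
    using that by (simp add: cycle_arc_def)
  then show ?thesis by (intro image_cong) auto
qed

lemma dir_cycleE:
  assumes "C \<in> dir_cycles n j"
  obtains f where "f \<in> {..<j} \<rightarrow>\<^sub>E {..<n}" "C = cycle_arc j f ` {..<j}"
proof -
  obtain f where f: "f ` {..<j} \<subseteq> {..<n}" "C = cycle_arc j f ` {..<j}"
    using assms unfolding dir_cycles_def cycle_arc_def by auto
  then have "C = cycle_arc j (restrict f {..<j}) ` {..<j}" by (simp add: cycle_arcs_restrict)
  moreover have "restrict f {..<j} \<in> {..<j} \<rightarrow>\<^sub>E {..<n}" using f(1) by auto
  ultimately show thesis using that by blast
qed

theorem lemma3p2:
  fixes n l j :: nat and R :: "(nat \<times> nat) set"
  assumes "R \<subseteq> dn_arcs n"
    and "card R = l"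
    and "R \<noteq> {}"
    and "l < j"
  shows "card {C \<in> dir_cycles n j. R \<subseteq> C} \<le> j ^ l * n ^ (j - l - 1)"
proof -
  let ?M = "{f \<in> {..<j} \<rightarrow>\<^sub>E {..<n}. R \<subseteq> cycle_arc j f ` {..<j}}"
  have "finite (dn_arcs n)"
    by (rule finite_subset[of _ "{..<n} \<times> {..<n}"]) (auto simp: dn_arcs_def)
  then have "finite R" using assms(1) by (rule rev_finite_subset)
  have "{C \<in> dir_cycles n j. R \<subseteq> C} \<subseteq> (\<lambda>f. cycle_arc j f ` {..<j}) ` ?M"
  proof
    fix C assume "C \<in> {C \<in> dir_cycles n j. R \<subseteq> C}"
    then have "C \<in> dir_cycles n j" "R \<subseteq> C" by simp_all
    then show "C \<in> (\<lambda>f. cycle_arc j f ` {..<j}) ` ?M"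
      by (elim dir_cycleE) (intro image_eqI; simp)
  qed
  then have "card {C \<in> dir_cycles n j. R \<subseteq> C} \<le> card ?M"
    by (rule surj_card_le[rotated]) (simp add: finite_PiE)
  also have "\<dots> \<le> j ^ l * n ^ (j - l - 1)"
    using card_maps_containing_arcs_le[of "{..<n}" R j] \<open>finite R\<close> assms(2-4) by simp
  finally show ?thesis .
qed

end
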